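(* Let $T\in\mathbb{Z}_{>0}$, $\mathcal T=\{0,\dots,T\}$, $\mathcal T_{a:b}=\mathcal T\cap\{a,\dots,b\}$, and let $\boldsymbol\xi=(\xi_0,\dots,\xi_T)$ be a stochastic process with finite support. Let $L\ge 1$, $\alpha\in(0,1)$ and $\Delta:=(\alpha^{1/2}-\alpha)/L$. Then: (a) If a deterministic square matrix $\Phi$ is $(L,\alpha)$-stable and $\|\Phi-\Phi_t(\boldsymbol\xi_{0:t})\|\le\Delta$ a.s. for all $t\in\mathcal T_{1:T}$, then $\{\Phi_t(\boldsymbol\xi_{0:t})\}_{t\in\mathcal T_{1:T}}$ is $(L,\alpha^{1/2})$-stable. (b) If the deterministic pair $(A,B)$ is $(L,\alpha)$-stabilizable, $\|A-A(\xi_t)\|\le\Delta/2$ and $\|B-B(\xi_t)\|\le\Delta/(2L)$ a.s. for $t\in\mathcal T_{1:T}$, then $(\{A(\xi_t)\}_{t\in\mathcal T_{1:T}},\{B(\xi_t)\}_{t\in\mathcal T_{1:T}})$ is $(L,\alpha^{1/2})$-stabilizable. (c) If the deterministic pair $(A,C)$ is $(L,\alpha)$-detectable, $\|A-A(\xi_t)\|\le\Delta/2$ a.s. for $t\in\mathcal T_{1:T}$ and $\|C-C(\xi_t)\|\le\Delta/(2L)$ a.s. for $t\in\mathcal T_{0:T-1}$, then $(\{A(\xi_t)\}_{t\in\mathcal T_{1:T}},\{C(\xi_t)\}_{t\in\mathcal T_{0:T-1}})$ is $(L,\alpha^{1/2})$-detectable.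
   Context: $\|\cdot\|$ is the Euclidean norm / induced 2-norm. $\boldsymbol\xi_{a:b}=(\xi_a,\dots,\xi_b)$. $A(\cdot),B(\cdot),C(\cdot)$ are matrix-valued functions of $\xi_t$; $\Phi_t(\cdot)$ is a square-matrix-valued function of $\boldsymbol\xi_{0:t}$. Deterministic notions (for $L>0,\alpha\in(0,1)$): a square matrix $\Phi$ is $(L,\alpha)$-stable if $\|\Phi^t\|\le L\alpha^t$ for all integers $t\ge0$; $(A,B)$ is $(L,\alpha)$-stabilizable if there is $K$ with $\|K\|\le L$ such that $A-BK$ is $(L,\alpha)$-stable; $(A,C)$ is $(L,\alpha)$-detectable if there is $K$ with $\|K\|\le L$ such that $A-KC$ is $(L,\alpha)$-stable. Stochastic notions: $\{\Phi_t(\boldsymbol\xi_{0:t})\}_{t\in\mathcal T_{1:T}}$ is $(L,\alpha)$-stable if $\|\Phi_{t''}(\boldsymbol\xi_{0:t''})\cdots\Phi_{t'+1}(\boldsymbol\xi_{0:t'+1})\|\le L\alpha^{t''-t'}$ a.s. for all $t'<t''$ in $\mathcal T$. $(\{A(\xi_t)\}_{t\in\mathcal T_{1:T}},\{B(\xi_t)\}_{t\in\mathcal T_{1:T}})$ is $(L,\alpha)$-stabilizable if there exist matrices $K_t(\boldsymbol\xi_{0:t})$, $t\in\mathcal T_{0:T-1}$ (functions of $\boldsymbol\xi_{0:t}$ only), with $\|K_t\|\le L$ a.s., such that $\{A(\xi_t)-B(\xi_t)K_{t-1}(\boldsymbol\xi_{0:t-1})\}_{t\in\mathcal T_{1:T}}$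 is $(L,\alpha)$-stable. $(\{A(\xi_t)\}_{t\in\mathcal T_{1:T}},\{C(\xi_t)\}_{t\in\mathcal T_{0:T-1}})$ is $(L,\alpha)$-detectable if there exist $K_t(\boldsymbol\xi_{0:t})$, $t\in\mathcal T_{1:T}$, with $\|K_t\|\le L$ a.s., such that $\{A(\xi_t)-K_t(\boldsymbol\xi_{0:t})C(\xi_{t-1})\}_{t\in\mathcal T_{1:T}}$ is $(L,\alpha)$-stable. *)

theory Defs
  imports "HOL-Analysis.Analysis" "HOL-Probability.Probability"
begin

definition opnorm :: "real^'n^'m \<Rightarrow> real" where
  "opnorm A = onorm (\<lambda>x. A *v x)"

definition matpow :: "real^'n^'n \<Rightarrow> nat \<Rightarrow> real^'n^'n" where
  "matpow Phi k = (((**) Phi) ^^ k) (mat 1)"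

text \<open>Ordered product  f b ** f (b-1) ** ... ** f (a+1)  (identity if b \<le> a).\<close>
definition mprod :: "(nat \<Rightarrow> real^'n^'n) \<Rightarrow> nat \<Rightarrow> nat \<Rightarrow> real^'n^'n" where
  "mprod f a b = fold (\<lambda>k acc. f k ** acc) [Suc a..<Suc b] (mat 1)"

definition det_stable :: "real^'n^'n \<Rightarrow> real \<Rightarrow> real \<Rightarrow> bool" where
  "det_stable Phi L \<alpha> \<longleftrightarrow> (\<forall>t::nat. opnorm (matpow Phi t) \<le> L * \<alpha> ^ t)"

definition det_stabilizable :: "real^'n^'n \<Rightarrow> real^'m^'n \<Rightarrow> real \<Rightarrow> real \<Rightarrow> bool" where
  "det_stabilizable A B L \<alpha> \<longleftrightarrow>
     (\<exists>K :: real^'n^'m. opnorm K \<le> L \<and> det_stable (A - B ** K) L \<alpha>)"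

definition det_detectable :: "real^'n^'n \<Rightarrow> real^'n^'p \<Rightarrow> real \<Rightarrow> real \<Rightarrow> bool" where
  "det_detectable A C L \<alpha> \<longleftrightarrow>
     (\<exists>K :: real^'p^'n. opnorm K \<le> L \<and> det_stable (A - K ** C) L \<alpha>)"

text \<open>The process \<xi> = (\<xi>_0,...,\<xi>_T) is a random list
  of length T+1 distributed according to the pmf p; \<xi>_t = xs ! t and
  \<xi>_{0:t} = take (Suc t) xs.  A matrix-valued function of \<xi>_{0:t} is a
  function \<Phi> t applied to the prefix take (Suc t) xs.\<close>
definition stoch_stable ::
  "'x list pmf \<Rightarrow> nat \<Rightarrow> (nat \<Rightarrow> 'x list \<Rightarrow> real^'n^'n) \<Rightarrow> real \<Rightarrow> real \<Rightarrow> bool" where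
  "stoch_stable p T Phi L \<alpha> \<longleftrightarrow>
     (\<forall>t1 t2. t1 < t2 \<and> t2 \<le> T \<longrightarrow>
        (AE xs in measure_pmf p.
           opnorm (mprod (\<lambda>k. Phi k (take (Suc k) xs)) t1 t2) \<le> L * \<alpha> ^ (t2 - t1)))"

definition stoch_stabilizable ::
  "'x list pmf \<Rightarrow> nat \<Rightarrow> ('x \<Rightarrow> real^'n^'n) \<Rightarrow> ('x \<Rightarrow> real^'m^'n) \<Rightarrow> real \<Rightarrow> real \<Rightarrow> bool" where
  "stoch_stabilizable p T A B L \<alpha> \<longleftrightarrow>
     (\<exists>K :: nat \<Rightarrow> 'x list \<Rightarrow> real^'n^'m.
        (\<forall>t. t \<le> T - 1 \<longrightarrow> (AE xs in measure_pmf p. opnorm (K t (take (Suc t) xs)) \<le> L)) \<and>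
        stoch_stable p T (\<lambda>t ys. A (ys ! t) - B (ys ! t) ** K (t - 1) (take t ys)) L \<alpha>)"

definition stoch_detectable ::
  "'x list pmf \<Rightarrow> nat \<Rightarrow> ('x \<Rightarrow> real^'n^'n) \<Rightarrow> ('x \<Rightarrow> real^'n^'p) \<Rightarrow> real \<Rightarrow> real \<Rightarrow> bool" where
  "stoch_detectable p T A C L \<alpha> \<longleftrightarrow>
     (\<exists>K :: nat \<Rightarrow> 'x list \<Rightarrow> real^'p^'n.
        (\<forall>t. 1 \<le> t \<and> t \<le> T \<longrightarrow> (AE xs in measure_pmf p. opnorm (K t (take (Suc t) xs)) \<le> L)) \<and>
        stoch_stable p T (\<lambda>t ys. A (ys ! t) - K t ys ** C (ys ! (t - 1))) L \<alpha>)"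

end

theory Submission
  imports Defs
begin

text \<open>Let \<open>\<beta> = \<alpha> + L \<Delta>\<close>. If every factor of the product \<open>M\<^sub>k = f\<^sub>k \<cdots> f\<^sub>1\<close> is within \<open>\<Delta>\<close>
  of the \<open>(L,\<alpha>)\<close>-stable matrix \<open>\<Phi>\<close>, splitting the newest factor as \<open>\<Phi> + (f\<^sub>k\<^sub>+\<^sub>1 - \<Phi>)\<close> gives
  \<open>\<Phi>\<^sup>j M\<^sub>k\<^sub>+\<^sub>1 = \<Phi>\<^sup>j\<^sup>+\<^sup>1 M\<^sub>k + \<Phi>\<^sup>j (f\<^sub>k\<^sub>+\<^sub>1 - \<Phi>) M\<^sub>k\<close>, and induction on \<open>k\<close>, for all \<open>j\<close> at once, yields
  \<open>\<parallel>\<Phi>\<^sup>j M\<^sub>k\<parallel> \<le> L \<alpha>\<^sup>j \<beta>\<^sup>k\<close>. For \<open>\<Delta> = (\<surd>\<alpha> - \<alpha>)/L\<close> this is \<open>\<beta> = \<surd>\<alpha>\<close>, which is (a).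
  For (b) and (c) the deterministic gain \<open>K\<close> is used at every time: the random closed loop
  differs from the deterministic one by at most \<open>\<Delta>/2 + L \<cdot> \<Delta>/(2L) = \<Delta>\<close>, so (a) applies.\<close>

lemma opnorm_nonneg: "0 \<le> opnorm (X :: real^'n^'m)"
  unfolding opnorm_def by (simp add: onorm_pos_le)

lemma opnorm_mult_le: "opnorm ((X :: real^'n^'m) ** Y) \<le> opnorm X * opnorm Y"
proof -
  have "(*v) (X ** Y) = (*v) X \<circ> (*v) Y"
    by (auto simp: matrix_vector_mul_assoc)
  then show ?thesis
    unfolding opnorm_def by (simp add: onorm_compose)
qed

lemma opnorm_mult_le_bounds:
  "opnorm (X :: real^'n^'m) \<le> a \<Longrightarrow> opnorm Y \<le> b \<Longrightarrow> opnorm (X ** Y) \<le> a * b"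
  by (rule order_trans[OF opnorm_mult_le mult_mono']) (simp_all add: opnorm_nonneg)

lemma opnorm_add_le: "opnorm ((X :: real^'n^'m) + Y) \<le> opnorm X + opnorm Y"
proof -
  have "(*v) (X + Y) = (\<lambda>x. X *v x + Y *v x)"
    by (auto simp: matrix_vector_mult_add_rdistrib)
  then show ?thesis
    unfolding opnorm_def by (simp add: onorm_triangle)
qed

lemma opnorm_uminus [simp]: "opnorm (- (X :: real^'n^'m)) = opnorm X"
proof -
  have "(*v) (- X) = (\<lambda>x. - (X *v x))"
    by (auto simp: matrix_vector_mult_diff_rdistrib[of 0 X, simplified])
  then show ?thesis
    unfolding opnorm_def by (simp add: onorm_neg)
qed

lemma opnorm_diff_le: "opnorm ((X :: real^'n^'m) - Y) \<le> opnorm X + opnorm Y"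
  using opnorm_add_le[of X "- Y"] by simp

lemma opnorm_minus_commute: "opnorm ((X :: real^'n^'m) - Y) = opnorm (Y - X)"
  using opnorm_uminus[of "Y - X"] by simp

lemma matrix_diff_rdistrib: "((X :: real^'n^'m) - Y) ** Z = X ** Z - Y ** Z"
  by (vector matrix_matrix_mult_def sum_subtractf[symmetric] field_simps)

lemma matrix_diff_ldistrib: "(X :: real^'n^'m) ** (Y - Z) = X ** Y - X ** Z"
  by (vector matrix_matrix_mult_def sum_subtractf[symmetric] field_simps)

lemma matpow_0 [simp]: "matpow P 0 = mat 1"
  by (simp add: matpow_def)

lemma matpow_Suc: "matpow P (Suc j) = P ** matpow P j"
  by (simp add: matpow_def)

lemma matpow_Suc_right: "matpow P j ** P = matpow P (Suc j)"
  by (induction j) (simp_all add: matpow_Suc flip: matrix_mul_assoc)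

lemma mprod_same [simp]: "mprod f a a = mat 1"
  by (simp add: mprod_def)

lemma mprod_Suc: "mprod f a (Suc (a + k)) = f (Suc (a + k)) ** mprod f a (a + k)"
  by (simp add: mprod_def)

lemma opnorm_matpow_mprod_perturb_le:
  fixes P :: "real^'n^'n" and f :: "nat \<Rightarrow> real^'n^'n"
  assumes stable: "det_stable P L \<alpha>"
    and close: "\<And>i. a < i \<Longrightarrow> i \<le> a + k \<Longrightarrow> opnorm (f i - P) \<le> \<Delta>"
  shows "opnorm (matpow P j ** mprod f a (a + k)) \<le> L * \<alpha> ^ j * (\<alpha> + L * \<Delta>) ^ k"
  using close
proof (induction k arbitrary: j)
  case 0
  then show ?case
    using stable by (simp add: det_stable_def)
next
  case (Suc k)
  let ?M = "mprod f a (a + k)" and ?F = "f (Suc (a + k))"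
  have IH: "opnorm (matpow P i ** ?M) \<le> L * \<alpha> ^ i * (\<alpha> + L * \<Delta>) ^ k" for i
    using Suc by simp
  have split: "matpow P j ** (?F ** ?M) = matpow P (Suc j) ** ?M + matpow P j ** ((?F - P) ** ?M)"
    by (simp add: matrix_diff_rdistrib matrix_diff_ldistrib matrix_mul_assoc matpow_Suc_right)
  have "opnorm (matpow P j ** ((?F - P) ** ?M)) \<le> L * \<alpha> ^ j * (\<Delta> * (L * (\<alpha> + L * \<Delta>) ^ k))"
    using stable Suc.prems IH[of 0]
    by (intro opnorm_mult_le_bounds) (simp_all add: det_stable_def)
  with IH[of "Suc j"] have
    "opnorm (matpow P j ** (?F ** ?M)) \<le> L * \<alpha> ^ Suc j * (\<alpha> + L * \<Delta>) ^ k + L * \<alpha> ^ j * (\<Delta> * (L * (\<alpha> + L * \<Delta>) ^ k))"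
    unfolding split by (meson add_mono opnorm_add_le order_trans)
  also have "\<dots> = L * \<alpha> ^ j * (\<alpha> + L * \<Delta>) ^ Suc k"
    by (simp add: algebra_simps)
  finally show ?case
    by (simp add: mprod_Suc)
qed

lemma opnorm_mprod_perturb_le:
  fixes P :: "real^'n^'n" and f :: "nat \<Rightarrow> real^'n^'n"
  assumes "det_stable P L \<alpha>" "a \<le> b"
    and "\<And>i. a < i \<Longrightarrow> i \<le> b \<Longrightarrow> opnorm (f i - P) \<le> \<Delta>"
  shows "opnorm (mprod f a b) \<le> L * (\<alpha> + L * \<Delta>) ^ (b - a)"
  using opnorm_matpow_mprod_perturb_le[of P L \<alpha> a "b - a" f \<Delta> 0] assms by simp

lemma stoch_stable_of_close_det_stable:
  fixes P :: "real^'n^'n" and Phit :: "nat \<Rightarrow> 'x list \<Rightarrow> real^'n^'n"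
  assumes stable: "det_stable P L \<alpha>"
    and close: "\<forall>t. 1 \<le> t \<and> t \<le> T \<longrightarrow>
      (AE xs in measure_pmf p. opnorm (P - Phit t (take (Suc t) xs)) \<le> \<Delta>)"
  shows "stoch_stable p T Phit L (\<alpha> + L * \<Delta>)"
  unfolding stoch_stable_def AE_measure_pmf_iff
proof (intro allI impI ballI)
  fix t1 t2 xs
  assume t12: "t1 < t2 \<and> t2 \<le> T" and xs: "xs \<in> set_pmf p"
  have "opnorm (Phit i (take (Suc i) xs) - P) \<le> \<Delta>" if "t1 < i" "i \<le> t2" for i
    using close[rule_format, of i] that t12 xs
    by (auto simp: AE_measure_pmf_iff opnorm_minus_commute)
  with stable t12 show "opnorm (mprod (\<lambda>k. Phit k (take (Suc k) xs)) t1 t2) \<le> L * (\<alpha> + L * \<Delta>) ^ (t2 - t1)"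
    by (intro opnorm_mprod_perturb_le) auto
qed

lemma opnorm_diff_mult_le:
  assumes "opnorm D \<le> \<Delta> / 2" "opnorm X \<le> a" "opnorm Y \<le> b" "a * b \<le> \<Delta> / 2"
  shows "opnorm (D - X ** Y) \<le> \<Delta>"
  using opnorm_diff_le[of D "X ** Y"] opnorm_mult_le_bounds[OF assms(2,3)] assms(1,4) by linarith

lemma stoch_stabilizable_of_close_det_stabilizable:
  fixes A :: "real^'n^'n" and B :: "real^'m^'n"
    and Ax :: "'x \<Rightarrow> real^'n^'n" and Bx :: "'x \<Rightarrow> real^'m^'n"
  assumes "det_stabilizable A B L \<alpha>" "0 < L"
    and A_close: "\<forall>t. 1 \<le> t \<and> t \<le> T \<longrightarrow> (AE xs in measure_pmf p. opnorm (A - Ax (xs ! t)) \<le> \<Delta> / 2)"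
    and B_close: "\<forall>t. 1 \<le> t \<and> t \<le> T \<longrightarrow> (AE xs in measure_pmf p. opnorm (B - Bx (xs ! t)) \<le> \<Delta> / (2 * L))"
  shows "stoch_stabilizable p T Ax Bx L (\<alpha> + L * \<Delta>)"
proof -
  obtain K where K: "opnorm K \<le> L" "det_stable (A - B ** K) L \<alpha>"
    using assms(1) unfolding det_stabilizable_def by blast
  have "stoch_stable p T (\<lambda>t ys. Ax (ys ! t) - Bx (ys ! t) ** K) L (\<alpha> + L * \<Delta>)"
  proof (rule stoch_stable_of_close_det_stable[OF K(2)], intro allI impI)
    fix t assume t: "1 \<le> t \<and> t \<le> T"
    from A_close B_close t have "AE xs in measure_pmf p. opnorm (A - Ax (xs ! t)) \<le> \<Delta> / 2"
      "AE xs in measure_pmf p. opnorm (B - Bx (xs ! t)) \<le> \<Delta> / (2 * L)" by simp_all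
    then show "AE xs in measure_pmf p.
        opnorm ((A - B ** K) - (Ax (take (Suc t) xs ! t) - Bx (take (Suc t) xs ! t) ** K)) \<le> \<Delta>"
    proof eventually_elim
      case (elim xs)
      have "(A - B ** K) - (Ax (xs ! t) - Bx (xs ! t) ** K) = (A - Ax (xs ! t)) - (B - Bx (xs ! t)) ** K"
        by (simp add: matrix_diff_rdistrib)
      moreover have "opnorm ((A - Ax (xs ! t)) - (B - Bx (xs ! t)) ** K) \<le> \<Delta>"
        using elim K(1) \<open>0 < L\<close> by (intro opnorm_diff_mult_le) auto
      ultimately show ?case
        by (simp only: nth_take lessI)
    qed
  qed
  with K(1) show ?thesis
    unfolding stoch_stabilizable_def by (intro exI[of _ "\<lambda>_ _. K"]) simp
qed

lemma stoch_detectable_of_close_det_detectable: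
  fixes A :: "real^'n^'n" and C :: "real^'n^'q"
    and Ax :: "'x \<Rightarrow> real^'n^'n" and Cx :: "'x \<Rightarrow> real^'n^'q"
  assumes "det_detectable A C L \<alpha>" "0 < L"
    and A_close: "\<forall>t. 1 \<le> t \<and> t \<le> T \<longrightarrow> (AE xs in measure_pmf p. opnorm (A - Ax (xs ! t)) \<le> \<Delta> / 2)"
    and C_close: "\<forall>t. t \<le> T - 1 \<longrightarrow> (AE xs in measure_pmf p. opnorm (C - Cx (xs ! t)) \<le> \<Delta> / (2 * L))"
  shows "stoch_detectable p T Ax Cx L (\<alpha> + L * \<Delta>)"
proof -
  obtain K where K: "opnorm K \<le> L" "det_stable (A - K ** C) L \<alpha>"
    using assms(1) unfolding det_detectable_def by blast
  have "stoch_stable p T (\<lambda>t ys. Ax (ys ! t) - K ** Cx (ys ! (t - 1))) L (\<alpha> + L * \<Delta>)"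
  proof (rule stoch_stable_of_close_det_stable[OF K(2)], intro allI impI)
    fix t assume t: "1 \<le> t \<and> t \<le> T"
    from A_close C_close[rule_format, of "t - 1"] t
    have "AE xs in measure_pmf p. opnorm (A - Ax (xs ! t)) \<le> \<Delta> / 2"
      "AE xs in measure_pmf p. opnorm (C - Cx (xs ! (t - 1))) \<le> \<Delta> / (2 * L)" by auto
    then show "AE xs in measure_pmf p.
        opnorm ((A - K ** C) - (Ax (take (Suc t) xs ! t) - K ** Cx (take (Suc t) xs ! (t - 1)))) \<le> \<Delta>"
    proof eventually_elim
      case (elim xs)
      have "(A - K ** C) - (Ax (xs ! t) - K ** Cx (xs ! (t - 1))) = (A - Ax (xs ! t)) - K ** (C - Cx (xs ! (t - 1)))"
        by (simp add: matrix_diff_ldistrib)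
      moreover have "opnorm ((A - Ax (xs ! t)) - K ** (C - Cx (xs ! (t - 1)))) \<le> \<Delta>"
        using elim K(1) \<open>0 < L\<close> by (intro opnorm_diff_mult_le) auto
      ultimately show ?case
        by (simp only: nth_take lessI diff_less_Suc)
    qed
  qed
  with K(1) show ?thesis
    unfolding stoch_detectable_def by (intro exI[of _ "\<lambda>_ _. K"]) simp
qed

theorem proposition1:
  fixes p :: "'x list pmf" and T :: nat and L \<alpha> :: real
    and Phi :: "real^'n^'n" and Phit :: "nat \<Rightarrow> 'x list \<Rightarrow> real^'n^'n"
    and A :: "real^'n^'n" and B :: "real^'m^'n" and C :: "real^'n^'q"
    and Ax :: "'x \<Rightarrow> real^'n^'n" and Bx :: "'x \<Rightarrow> real^'m^'n" and Cx :: "'x \<Rightarrow> real^'n^'q"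
  assumes T_pos: "T > 0"
    and fin: "finite (set_pmf p)"
    and len: "\<forall>xs\<in>set_pmf p. length xs = Suc T"
    and L_ge: "L \<ge> 1"
    and \<alpha>_pos: "0 < \<alpha>" and \<alpha>_lt: "\<alpha> < 1"
  shows
    "(det_stable Phi L \<alpha> \<and>
      (\<forall>t. 1 \<le> t \<and> t \<le> T \<longrightarrow>
         (AE xs in measure_pmf p. opnorm (Phi - Phit t (take (Suc t) xs)) \<le> (sqrt \<alpha> - \<alpha>) / L))
      \<longrightarrow> stoch_stable p T Phit L (sqrt \<alpha>))
   \<and> (det_stabilizable A B L \<alpha> \<and>
      (\<forall>t. 1 \<le> t \<and> t \<le> T \<longrightarrow>
         (AE xs in measure_pmf p. opnorm (A - Ax (xs ! t)) \<le> ((sqrt \<alpha> - \<alpha>) / L) / 2)) \<and>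
      (\<forall>t. 1 \<le> t \<and> t \<le> T \<longrightarrow>
         (AE xs in measure_pmf p. opnorm (B - Bx (xs ! t)) \<le> ((sqrt \<alpha> - \<alpha>) / L) / (2 * L)))
      \<longrightarrow> stoch_stabilizable p T Ax Bx L (sqrt \<alpha>))
   \<and> (det_detectable A C L \<alpha> \<and>
      (\<forall>t. 1 \<le> t \<and> t \<le> T \<longrightarrow>
         (AE xs in measure_pmf p. opnorm (A - Ax (xs ! t)) \<le> ((sqrt \<alpha> - \<alpha>) / L) / 2)) \<and>
      (\<forall>t. t \<le> T - 1 \<longrightarrow>
         (AE xs in measure_pmf p. opnorm (C - Cx (xs ! t)) \<le> ((sqrt \<alpha> - \<alpha>) / L) / (2 * L)))
      \<longrightarrow> stoch_detectable p T Ax Cx L (sqrt \<alpha>))"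
proof -
  have L_pos: "0 < L" using L_ge by simp
  then have sqrt_\<alpha>: "\<alpha> + L * ((sqrt \<alpha> - \<alpha>) / L) = sqrt \<alpha>" by simp
  show ?thesis
    using stoch_stable_of_close_det_stable[where L = L and \<alpha> = \<alpha> and \<Delta> = "(sqrt \<alpha> - \<alpha>) / L"]
      stoch_stabilizable_of_close_det_stabilizable[where L = L and \<alpha> = \<alpha> and \<Delta> = "(sqrt \<alpha> - \<alpha>) / L", OF _ L_pos]
      stoch_detectable_of_close_det_detectable[where L = L and \<alpha> = \<alpha> and \<Delta> = "(sqrt \<alpha> - \<alpha>) / L", OF _ L_pos]
    unfolding sqrt_\<alpha> by blast
qed

end
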